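(* Let $n\equiv 9\pmod{12}$. (1) If there exists an $\mathrm{LKTS}(n)$, then there exists a $\mathrm{TOC}_3(n,5,3)$. (2) If there exists an $\mathrm{OLKTS}(n)$, then there exists a $\mathrm{TOC}_3(n+1,5,3)$.
   Context: $\mathcal{H}_q(n,w)$ is the set of all words of length $n$ over $\mathbb{Z}_q$ with exactly $w$ nonzero entries, with the Hamming distance. An $(n,d,w)_q$-code is a nonempty subset of $\mathcal{H}_q(n,w)$ in which any two distinct words have Hamming distance at least $d$; $A_q(n,d,w)$ is the maximum size of such a code and a code of this size is optimal. A $\mathrm{TOC}_q(n,d,w)$ is a partition of $\mathcal{H}_q(n,w)$ into mutually disjoint optimal $(n,d,w)_q$-codes. A Kirkman triple system $\mathrm{KTS}(n)$ is a Steiner triple system on an $n$-set (a family of 3-subsets such that every pair lies in exactly one of them) whose triples can be partitioned into parallel classes, each partitioning the point set. A large set $\mathrm{LKTS}(n)$ is a partition of all 3-subsets of an $n$-set into block sets of $\mathrm{KTS}(n)$'s on that set. An overlarge set $\mathrm{OLKTS}(n)$ is a partition of all 3-subsets of an $(n+1)$-set $X$ into block sets $\mathcal{B}_x$, $x\in X$, such that each $(X\setminus\{x\},\mathcal{B}_x)$ is a $\mathrm{KTS}(n)$. *)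

theory Defs
  imports Main
begin

definition words :: "nat \<Rightarrow> nat \<Rightarrow> (nat \<Rightarrow> nat) set" where
  "words q n = {x. (\<forall>i<n. x i < q) \<and> (\<forall>i\<ge>n. x i = 0)}"

definition supp :: "(nat \<Rightarrow> nat) \<Rightarrow> nat set" where
  "supp x = {i. x i \<noteq> 0}"

definition Hq :: "nat \<Rightarrow> nat \<Rightarrow> nat \<Rightarrow> (nat \<Rightarrow> nat) set" where
  "Hq q n w = {x \<in> words q n. card (supp x) = w}"

definition hdist :: "nat \<Rightarrow> (nat \<Rightarrow> nat) \<Rightarrow> (nat \<Rightarrow> nat) \<Rightarrow> nat" where
  "hdist n x y = card {i. i < n \<and> x i \<noteq> y i}"

definition is_code :: "nat \<Rightarrow> nat \<Rightarrow> nat \<Rightarrow> nat \<Rightarrow> (nat \<Rightarrow> nat) set \<Rightarrow> bool" where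
  "is_code q n d w C \<longleftrightarrow> C \<noteq> {} \<and> C \<subseteq> Hq q n w \<and>
     (\<forall>x\<in>C. \<forall>y\<in>C. x \<noteq> y \<longrightarrow> d \<le> hdist n x y)"

definition Aq :: "nat \<Rightarrow> nat \<Rightarrow> nat \<Rightarrow> nat \<Rightarrow> nat" where
  "Aq q n d w = Max {card C | C. is_code q n d w C}"

definition optimal_code :: "nat \<Rightarrow> nat \<Rightarrow> nat \<Rightarrow> nat \<Rightarrow> (nat \<Rightarrow> nat) set \<Rightarrow> bool" where
  "optimal_code q n d w C \<longleftrightarrow> is_code q n d w C \<and> card C = Aq q n d w"

definition is_TOC :: "nat \<Rightarrow> nat \<Rightarrow> nat \<Rightarrow> nat \<Rightarrow> (nat \<Rightarrow> nat) set set \<Rightarrow> bool" where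
  "is_TOC q n d w P \<longleftrightarrow> (\<forall>C\<in>P. optimal_code q n d w C) \<and> \<Union>P = Hq q n w \<and>
     (\<forall>C\<in>P. \<forall>D\<in>P. C \<noteq> D \<longrightarrow> C \<inter> D = {})"

definition triples :: "'a set \<Rightarrow> 'a set set" where
  "triples X = {T. T \<subseteq> X \<and> card T = 3}"

definition is_STS :: "'a set \<Rightarrow> 'a set set \<Rightarrow> bool" where
  "is_STS X B \<longleftrightarrow> finite X \<and> B \<subseteq> triples X \<and>
     (\<forall>x\<in>X. \<forall>y\<in>X. x \<noteq> y \<longrightarrow> (\<exists>!T. T \<in> B \<and> {x, y} \<subseteq> T))"

definition parallel_class :: "'a set \<Rightarrow> 'a set set \<Rightarrow> bool" where
  "parallel_class X P \<longleftrightarrow> \<Union>P = X \<and> (\<forall>S\<in>P. \<forall>T\<in>P. S \<noteq> T \<longrightarrow> S \<inter> T = {})"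

definition is_KTS :: "'a set \<Rightarrow> 'a set set \<Rightarrow> bool" where
  "is_KTS X B \<longleftrightarrow> is_STS X B \<and>
     (\<exists>R. \<Union>R = B \<and> (\<forall>P\<in>R. \<forall>Q\<in>R. P \<noteq> Q \<longrightarrow> P \<inter> Q = {}) \<and>
          (\<forall>P\<in>R. parallel_class X P))"

definition exists_LKTS :: "nat \<Rightarrow> bool" where
  "exists_LKTS n \<longleftrightarrow> (\<exists>(X::nat set) L. finite X \<and> card X = n \<and>
     \<Union>L = triples X \<and> (\<forall>B\<in>L. \<forall>B'\<in>L. B \<noteq> B' \<longrightarrow> B \<inter> B' = {}) \<and>
     (\<forall>B\<in>L. is_KTS X B))"

definition exists_OLKTS :: "nat \<Rightarrow> bool" where
  "exists_OLKTS n \<longleftrightarrow> (\<exists>(X::nat set) (\<B>::nat \<Rightarrow> nat set set). finite X \<and> card X = n + 1 \<and>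
     (\<Union>x\<in>X. \<B> x) = triples X \<and>
     (\<forall>x\<in>X. \<forall>y\<in>X. x \<noteq> y \<longrightarrow> \<B> x \<inter> \<B> y = {}) \<and>
     (\<forall>x\<in>X. is_KTS (X - {x}) (\<B> x)))"

end

theory Submission
  imports Defs "HOL-Library.Z2" "HOL-Library.Product_Plus" "HOL-Library.FuncSet" "HOL-Library.Disjoint_Sets"
begin

text \<open>
  A word of weight three over Z_3 is a 3-set T of coordinates carrying a symbol 1 or 2 at each
  point of T. Two words of a code of minimum distance 5 never carry the same nonzero symbol in
  the same coordinate, so such a code has at most 2N/3 words.

  Conversely, take two parallel classes P and Q of a KTS(n). Their 2n/3 blocks pairwise meet in
  at most one point and every point lies on exactly two of them, so the points can be coloured
  greedily by vectors of GF(2)^3 making the three colours on every block linearly independent.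
  For k in GF(2)^3, give coordinate i of a block T the symbol determined by the inner product of
  the colour of i with k, shifted by one when T lies in P. This yields eight optimal codes which
  partition the words supported on blocks of P and Q. As n = 9 (mod 12), the number (n - 1)/2 of
  parallel classes of a KTS(n) is even, so the classes can be paired up; a large or overlarge set
  then partitions all 3-sets of coordinates into such pairs of classes.
\<close>

section \<open>The vector space GF(2)^3\<close>

type_synonym vec3 = "bit \<times> bit \<times> bit"

lemma UNIV_bit: "(UNIV :: bit set) = {0, 1}"
  using bit.exhaust by auto

instance bit :: finite
  by standard (simp add: UNIV_bit)

lemma card_UNIV_bit: "card (UNIV :: bit set) = 2"
  by (simp add: UNIV_bit)

lemma bit_add_self [simp]: "b + b = (0 :: bit)"
  by (cases b) simp_all

lemma card_UNIV_vec3: "card (UNIV :: vec3 set) = 8"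
  by (simp add: UNIV_Times_UNIV[symmetric] card_cartesian_product card_UNIV_bit del: UNIV_Times_UNIV)

lemma vec3_uminus [simp]: "- v = (v :: vec3)"
  by (cases v) simp

lemma vec3_add_self [simp]: "v + v = (0 :: vec3)"
  by (metis ab_left_minus vec3_uminus)

fun dot :: "vec3 \<Rightarrow> vec3 \<Rightarrow> bit" where
  "dot (a1, a2, a3) (b1, b2, b3) = a1 * b1 + a2 * b2 + a3 * b3"

lemma dot_add_left: "dot (u + v) k = dot u k + dot v k"
  by (cases u; cases v; cases k) (simp add: algebra_simps del: add_bit_eq_xor mult_bit_eq_and)

lemma dot_add_right: "dot u (k + l) = dot u k + dot u l"
  by (cases u; cases k; cases l) (simp add: algebra_simps del: add_bit_eq_xor mult_bit_eq_and)

lemma dot_zero_left [simp]: "dot 0 k = 0"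
  by (cases k) (simp add: zero_prod_def)

lemma dot_sum_left: "dot (\<Sum>i\<in>S. f i) k = (\<Sum>i\<in>S. dot (f i) k)"
  using sum_comp_morphism[of "\<lambda>v. dot v k" f S] by (simp add: dot_add_left o_def)

lemma dot_eq_0_all:
  assumes "\<And>v. dot v k = 0"
  shows "k = 0"
  using assms[of "(1,0,0)"] assms[of "(0,1,0)"] assms[of "(0,0,1)"]
  by (cases k) (simp add: zero_prod_def)

definition subset_sums :: "('a \<Rightarrow> vec3) \<Rightarrow> 'a set \<Rightarrow> vec3 set" where
  "subset_sums col A = (\<lambda>S. \<Sum>i\<in>S. col i) ` Pow A"

text \<open>Over GF(2) linear combinations are subset sums, so this says that the colours of the points
  of A are distinct and linearly independent.\<close>

definition independent_on :: "('a \<Rightarrow> vec3) \<Rightarrow> 'a set \<Rightarrow> bool" where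
  "independent_on col A \<longleftrightarrow> (\<forall>S\<subseteq>A. S \<noteq> {} \<longrightarrow> (\<Sum>i\<in>S. col i) \<noteq> 0)"

lemma independent_on_empty [simp]: "independent_on col {}"
  by (simp add: independent_on_def)

lemma independent_on_cong:
  "(\<And>i. i \<in> A \<Longrightarrow> col i = col' i) \<Longrightarrow> independent_on col A \<longleftrightarrow> independent_on col' A"
  unfolding independent_on_def by (metis (no_types, lifting) subsetD sum.cong)

lemma subset_sums_cong:
  "(\<And>i. i \<in> A \<Longrightarrow> col i = col' i) \<Longrightarrow> subset_sums col A = subset_sums col' A"
  unfolding subset_sums_def by (intro image_cong refl sum.cong) auto

lemma independent_on_insert:
  assumes "finite A" "x \<notin> A" "independent_on col A" "col x \<notin> subset_sums col A"
  shows "independent_on col (insert x A)"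
  unfolding independent_on_def
proof (intro allI impI)
  fix S assume S: "S \<subseteq> insert x A" "S \<noteq> {}"
  show "(\<Sum>i\<in>S. col i) \<noteq> 0"
  proof (cases "x \<in> S")
    case True
    have "finite S" using S(1) assms(1) finite_subset by blast
    then have "(\<Sum>i\<in>S. col i) = col x + (\<Sum>i\<in>S - {x}. col i)"
      using True by (simp add: sum.remove)
    moreover have "(\<Sum>i\<in>S - {x}. col i) \<in> subset_sums col A"
      using S(1) unfolding subset_sums_def by blast
    ultimately show ?thesis
      using assms(4) by (metis add_eq_0_iff vec3_uminus)
  next
    case False
    then show ?thesis using S assms(3) unfolding independent_on_def by blast
  qed
qed

lemma independent_on_inj_subset_sums:
  assumes "finite A" "independent_on col A"
  shows "inj_on (\<lambda>S. \<Sum>i\<in>S. col i) (Pow A)"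
proof (rule inj_onI)
  fix S1 S2 assume S: "S1 \<in> Pow A" "S2 \<in> Pow A" and eq: "(\<Sum>i\<in>S1. col i) = (\<Sum>i\<in>S2. col i)"
  have fin: "finite S1" "finite S2" using S assms(1) finite_subset by auto
  have "(\<Sum>i\<in>S1 - S2. col i) = (\<Sum>i\<in>S2 - S1. col i)"
    using eq sum.Int_Diff[OF fin(1), of col S2] sum.Int_Diff[OF fin(2), of col S1]
    by (simp add: Int_commute)
  then have "(\<Sum>i\<in>(S1 - S2) \<union> (S2 - S1). col i) = 0"
    using fin by (subst sum.union_disjoint) auto
  moreover have "(S1 - S2) \<union> (S2 - S1) \<subseteq> A" using S by auto
  ultimately have "(S1 - S2) \<union> (S2 - S1) = {}"
    using assms(2) unfolding independent_on_def by blast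
  then show "S1 = S2" by blast
qed

lemma subset_sums_eq_UNIV:
  assumes "card T = 3" "independent_on col T"
  shows "subset_sums col T = UNIV"
proof (rule card_subset_eq)
  have fin: "finite T" using assms(1) by (intro card_ge_0_finite) simp
  show "finite (UNIV :: vec3 set)" by simp
  show "card (subset_sums col T) = card (UNIV :: vec3 set)"
    using card_image[OF independent_on_inj_subset_sums[OF fin assms(2)]] card_Pow[OF fin] assms(1)
    by (simp add: subset_sums_def card_UNIV_vec3)
qed simp

text \<open>An independent triple spans GF(2)^3, so only 0 is orthogonal to all of it; surjectivity
  then follows by counting, both sides having 8 elements.\<close>

lemma bij_betw_dot_restrict:
  assumes "card T = 3" "independent_on col T"
  shows "bij_betw (\<lambda>k. restrict (\<lambda>i. dot (col i) k) T) UNIV (T \<rightarrow>\<^sub>E UNIV)"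
proof -
  have fin: "finite T" using assms(1) by (intro card_ge_0_finite) simp
  have inj: "inj (\<lambda>k. restrict (\<lambda>i. dot (col i) k) T)"
  proof (rule injI)
    fix k l assume "restrict (\<lambda>i. dot (col i) k) T = restrict (\<lambda>i. dot (col i) l) T"
    then have kl: "dot (col i) (k + l) = 0" if "i \<in> T" for i
      using that by (metis bit_add_self dot_add_right restrict_apply')
    have "dot v (k + l) = 0" for v
    proof -
      obtain S where "S \<subseteq> T" "v = (\<Sum>i\<in>S. col i)"
        using subset_sums_eq_UNIV[OF assms] unfolding subset_sums_def by blast
      then show ?thesis using kl by (simp add: dot_sum_left subset_iff)
    qed
    then have "k + l = 0" by (rule dot_eq_0_all)
    then show "k = l" by (metis add_eq_0_iff vec3_uminus)
  qed
  have "card (T \<rightarrow>\<^sub>E (UNIV :: bit set)) = card (UNIV :: vec3 set)"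
    using fin assms(1) by (simp add: card_PiE card_UNIV_bit card_UNIV_vec3)
  then have "range (\<lambda>k. restrict (\<lambda>i. dot (col i) k) T) = T \<rightarrow>\<^sub>E UNIV"
    using fin card_image[OF inj] by (intro card_subset_eq) (auto simp: finite_PiE)
  with inj show ?thesis unfolding bij_betw_def by blast
qed

section \<open>Independent colourings\<close>

lemma card_nonzero_subset_sums:
  assumes "finite A" "card A \<le> 2"
  shows "card (subset_sums col A - {0}) \<le> 3"
proof -
  have "subset_sums col A - {0} \<subseteq> (\<lambda>S. \<Sum>i\<in>S. col i) ` (Pow A - {{}})"
  proof
    fix v assume "v \<in> subset_sums col A - {0}"
    then obtain S where "S \<subseteq> A" "v = (\<Sum>i\<in>S. col i)" "v \<noteq> 0"
      unfolding subset_sums_def by auto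
    then show "v \<in> (\<lambda>S. \<Sum>i\<in>S. col i) ` (Pow A - {{}})" by auto
  qed
  then have "card (subset_sums col A - {0}) \<le> card ((\<lambda>S. \<Sum>i\<in>S. col i) ` (Pow A - {{}}))"
    using assms(1) by (intro card_mono) simp_all
  also have "\<dots> \<le> card (Pow A - {{}})" using assms(1) by (intro card_image_le) simp
  also have "\<dots> = 2 ^ card A - 1" using assms(1) by (simp add: card_Pow card_Diff_singleton)
  also have "\<dots> \<le> 2 ^ 2 - 1" using assms(2) by (intro diff_le_mono power_increasing) simp_all
  finally show ?thesis by simp
qed

text \<open>Two spans of at most two vectors each contain at most 1 + 3 + 3 = 7 of the 8 vectors.\<close>

lemma vector_outside_two_spans:
  assumes "finite F" "card F \<le> 2" "\<And>A. A \<in> F \<Longrightarrow> finite A \<and> card A \<le> 2"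
  shows "\<exists>a. \<forall>A\<in>F. a \<notin> subset_sums col A"
proof -
  have "card (\<Union>A\<in>F. subset_sums col A - {0}) \<le> (\<Sum>A\<in>F. card (subset_sums col A - {0}))"
    using assms(1) by (rule card_UN_le)
  also have "\<dots> \<le> (\<Sum>A\<in>F. 3)"
    by (rule sum_mono) (use card_nonzero_subset_sums assms(3) in blast)
  finally have "card (insert 0 (\<Union>A\<in>F. subset_sums col A - {0})) \<le> 7"
    using assms(2) by (intro card_insert_le_m1) auto
  then have "insert 0 (\<Union>A\<in>F. subset_sums col A - {0}) \<noteq> UNIV"
    using card_UNIV_vec3 by auto
  then show ?thesis by blast
qed

lemma independent_colouring_step:
  assumes E: "finite E" "\<And>T. T \<in> E \<Longrightarrow> card T = 3" "card {T\<in>E. x \<in> T} \<le> 2"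
    and x: "x \<notin> V" and col: "\<forall>T\<in>E. independent_on col (T \<inter> V)"
  shows "\<exists>a. \<forall>T\<in>E. independent_on (col(x := a)) (T \<inter> insert x V)"
proof -
  have fin: "finite T" if "T \<in> E" for T
    using E(2)[OF that] by (intro card_ge_0_finite) simp
  define F where "F = (\<lambda>T. T \<inter> V) ` {T\<in>E. x \<in> T}"
  have "finite A \<and> card A \<le> 2" if A: "A \<in> F" for A
  proof -
    obtain T where T: "T \<in> E" "x \<in> T" "A = T \<inter> V" using A unfolding F_def by blast
    then have "A \<subseteq> T - {x}" using x by blast
    then show ?thesis using T fin card_mono[of "T - {x}" A] E(2) finite_subset by fastforce
  qed
  moreover have "card F \<le> 2"
    unfolding F_def using E(1,3) card_image_le[of "{T\<in>E. x \<in> T}" "\<lambda>T. T \<inter> V"] by simp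
  moreover have "finite F" unfolding F_def using E(1) by simp
  ultimately obtain a where "\<forall>A\<in>F. a \<notin> subset_sums col A"
    using vector_outside_two_spans by blast
  then have a: "a \<notin> subset_sums col (T \<inter> V)" if "T \<in> E" "x \<in> T" for T
    using that unfolding F_def by blast
  have "independent_on (col(x := a)) (T \<inter> insert x V)" if T: "T \<in> E" for T
  proof (cases "x \<in> T")
    case True
    have "a \<notin> subset_sums (col(x := a)) (T \<inter> V)"
      using a[OF T True] x by (subst subset_sums_cong[of _ _ col]) auto
    moreover have "independent_on (col(x := a)) (T \<inter> V)"
      using col T x by (subst independent_on_cong[of _ _ col]) auto
    ultimately have "independent_on (col(x := a)) (insert x (T \<inter> V))"
      using fin[OF T] x by (intro independent_on_insert) auto
    then show ?thesis using True by (simp add: Int_insert_right)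
  next
    case False
    then have "T \<inter> insert x V = T \<inter> V" by blast
    then show ?thesis
      using col T x by (subst independent_on_cong[of _ _ col]) auto
  qed
  then show ?thesis by blast
qed

lemma independent_colouring_exists:
  assumes "finite E" "\<And>T. T \<in> E \<Longrightarrow> card T = 3" "\<And>x. card {T\<in>E. x \<in> T} \<le> 2"
  shows "\<exists>col. \<forall>T\<in>E. independent_on col T"
proof -
  have "finite V \<Longrightarrow> \<exists>col. \<forall>T\<in>E. independent_on col (T \<inter> V)" for V
  proof (induction V rule: finite_induct)
    case empty
    then show ?case by simp
  next
    case (insert x V)
    then obtain col where "\<forall>T\<in>E. independent_on col (T \<inter> V)" by blast
    with independent_colouring_step[OF assms(1,2) assms(3) insert.hyps(2)] show ?case
      by blast
  qed
  moreover have "finite (\<Union>E)"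
    using assms(1,2) by (metis card_ge_0_finite finite_Union zero_less_numeral)
  ultimately obtain col where "\<forall>T\<in>E. independent_on col (T \<inter> \<Union>E)" by blast
  moreover have "T \<inter> \<Union>E = T" if "T \<in> E" for T using that by blast
  ultimately show ?thesis by auto
qed

section \<open>Words of weight three over Z_3\<close>

lemma finite_triples: "finite X \<Longrightarrow> finite (triples X)"
  unfolding triples_def by (rule finite_subset[of _ "Pow X"]) auto

definition symbol :: "bit \<Rightarrow> nat" where
  "symbol b = (if b = 0 then 1 else 2)"

definition word :: "nat set \<Rightarrow> (nat \<Rightarrow> bit) \<Rightarrow> nat \<Rightarrow> nat" where
  "word T b i = (if i \<in> T then symbol (b i) else 0)"

lemma symbol_eq_iff [simp]: "symbol b = symbol c \<longleftrightarrow> b = c"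
  by (cases b; cases c) (simp_all add: symbol_def)

lemma symbol_pos [simp]: "0 < symbol b"
  by (simp add: symbol_def)

lemma supp_word [simp]: "supp (word T b) = T"
  by (auto simp: supp_def word_def symbol_def)

lemma word_eq_iff: "word S b = word T c \<longleftrightarrow> S = T \<and> (\<forall>i\<in>T. b i = c i)"
proof
  assume eq: "word S b = word T c"
  then have "S = T" by (metis supp_word)
  with eq show "S = T \<and> (\<forall>i\<in>T. b i = c i)"
    by (metis symbol_eq_iff word_def)
qed (auto simp: word_def)

lemma word_in_Hq: "T \<in> triples {..<N} \<Longrightarrow> word T b \<in> Hq 3 N 3"
  by (auto simp: Hq_def words_def triples_def word_def symbol_def)

lemma Hq_supp_triple: "w \<in> Hq 3 N 3 \<Longrightarrow> supp w \<in> triples {..<N}"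
  by (auto simp: Hq_def words_def triples_def supp_def not_less[symmetric])

lemma Hq_eq_word:
  assumes "w \<in> Hq 3 N 3"
  shows "w = word (supp w) (\<lambda>i. if w i = 1 then 0 else 1)"
proof
  fix i
  have "w i < 3" if "i \<in> supp w"
    using assms Hq_supp_triple[OF assms] that unfolding Hq_def words_def triples_def by auto
  then show "w i = word (supp w) (\<lambda>i. if w i = 1 then 0 else 1) i"
    by (auto simp: word_def symbol_def supp_def)
qed

lemma hdist_word:
  assumes "S \<union> T \<subseteq> {..<N}" "\<forall>i\<in>S \<inter> T. b i \<noteq> c i"
  shows "hdist N (word S b) (word T c) = card (S \<union> T)"
proof -
  have "{i. i < N \<and> word S b i \<noteq> word T c i} = S \<union> T"
    using assms by (auto simp: word_def)
  then show ?thesis unfolding hdist_def by simp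
qed

lemma finite_Hq: "finite (Hq q N w)"
proof -
  have "finite {x. \<forall>i. (i \<in> {..<N} \<longrightarrow> x i \<in> {..<q}) \<and> (i \<notin> {..<N} \<longrightarrow> x i = (0::nat))}"
    by (rule finite_set_of_finite_funs) simp_all
  moreover have "Hq q N w \<subseteq> {x. \<forall>i. (i \<in> {..<N} \<longrightarrow> x i \<in> {..<q}) \<and> (i \<notin> {..<N} \<longrightarrow> x i = 0)}"
    by (auto simp: Hq_def words_def)
  ultimately show ?thesis by (rule finite_subset[rotated])
qed

lemma code_common_symbol:
  assumes C: "is_code 3 N 5 3 C" and w: "w \<in> C" "w' \<in> C" and i: "w i \<noteq> 0" "w i = w' i"
  shows "w = w'"
proof (rule ccontr)
  assume "w \<noteq> w'"
  then have dist: "5 \<le> hdist N w w'" using C w unfolding is_code_def by blast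
  have card3: "card (supp w) = 3" "card (supp w') = 3"
    using C w unfolding is_code_def Hq_def by auto
  then have fin: "finite (supp w)" "finite (supp w')"
    by (auto intro: card_ge_0_finite)
  have common: "i \<in> supp w \<inter> supp w'" using i unfolding supp_def by auto
  then have "1 \<le> card (supp w \<inter> supp w')"
    using fin by (simp add: Suc_le_eq card_gt_0_iff) blast
  then have "card (supp w \<union> supp w') \<le> 5"
    using card_Un_Int[OF fin] card3 by linarith
  then have "card (supp w \<union> supp w' - {i}) \<le> 4"
    using common fin by (simp add: card_Diff_singleton)
  moreover have "{j. j < N \<and> w j \<noteq> w' j} \<subseteq> supp w \<union> supp w' - {i}"
    using i unfolding supp_def by auto
  ultimately have "hdist N w w' \<le> 4"
    unfolding hdist_def using fin by (meson card_mono finite_Diff finite_UnI le_trans)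
  with dist show False by simp
qed

text \<open>By the previous lemma every pair (coordinate, nonzero symbol) occurs in at most one
  codeword, and each codeword accounts for three such pairs.\<close>

lemma card_code_le:
  assumes C: "is_code 3 N 5 3 C"
  shows "3 * card C \<le> 2 * N"
proof -
  have H: "C \<subseteq> Hq 3 N 3" using C unfolding is_code_def by blast
  then have fin: "finite C" using finite_Hq finite_subset by blast
  have supp: "supp w \<in> triples {..<N}" if "w \<in> C" for w using H Hq_supp_triple that by blast
  then have "3 * card C = card (Sigma C supp)"
    using fin by (subst card_SigmaI) (auto simp: triples_def intro: finite_subset)
  also have "\<dots> \<le> card ({..<N} \<times> {1, 2 :: nat})"
  proof (rule card_inj_on_le)
    show "inj_on (\<lambda>(w, i). (i, w i)) (Sigma C supp)"
    proof (rule inj_onI)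
      fix p q assume "p \<in> Sigma C supp" "q \<in> Sigma C supp"
        and eq: "(\<lambda>(w, i). (i, w i)) p = (\<lambda>(w, i). (i, w i)) q"
      then obtain w i w' where "p = (w, i)" "q = (w', i)" "w \<in> C" "w' \<in> C" "w i \<noteq> 0" "w i = w' i"
        unfolding supp_def by auto
      then show "p = q" using code_common_symbol[OF C] by simp
    qed
    have "w i \<in> {1, 2}" if "w \<in> C" "i \<in> supp w" for w i
    proof -
      have "i < N" using supp that unfolding triples_def by blast
      then have "w i < 3" using H that(1) unfolding Hq_def words_def by blast
      moreover have "w i \<noteq> 0" using that(2) unfolding supp_def by simp
      ultimately show ?thesis by auto
    qed
    then show "(\<lambda>(w, i). (i, w i)) ` Sigma C supp \<subseteq> {..<N} \<times> {1, 2}"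
      using supp unfolding triples_def by force
  qed simp
  also have "\<dots> = 2 * N" by simp
  finally show ?thesis .
qed

lemma optimal_code_if_card_ge:
  assumes C: "is_code 3 N 5 3 C" and card: "2 * N div 3 \<le> card C"
  shows "optimal_code 3 N 5 3 C"
proof -
  have bound: "card C' \<le> 2 * N div 3" if "is_code 3 N 5 3 C'" for C'
    using card_code_le[OF that] by linarith
  have "Max {card C' | C'. is_code 3 N 5 3 C'} = card C"
  proof (rule Max_eqI)
    have "{card C' | C'. is_code 3 N 5 3 C'} \<subseteq> {..2 * N div 3}" using bound by blast
    then show "finite {card C' | C'. is_code 3 N 5 3 C'}" by (rule finite_subset) simp
    show "card C \<in> {card C' | C'. is_code 3 N 5 3 C'}" using C by blast
    fix m assume "m \<in> {card C' | C'. is_code 3 N 5 3 C'}"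
    then obtain C' where "m = card C'" "is_code 3 N 5 3 C'" by blast
    then show "m \<le> card C" using bound[of C'] card by linarith
  qed
  then show ?thesis using C unfolding optimal_code_def Aq_def by simp
qed

section \<open>Codes from groups of blocks\<close>

definition partial_linear :: "'a set set \<Rightarrow> bool" where
  "partial_linear g \<longleftrightarrow> (\<forall>S\<in>g. \<forall>T\<in>g. S \<noteq> T \<longrightarrow> card (S \<inter> T) \<le> 1)"

definition union_of_two_packings :: "'a set set \<Rightarrow> bool" where
  "union_of_two_packings g \<longleftrightarrow> (\<exists>P\<subseteq>g. disjoint P \<and> disjoint (g - P))"

lemma partial_linear_subset: "partial_linear B \<Longrightarrow> g \<subseteq> B \<Longrightarrow> partial_linear g"
  unfolding partial_linear_def by blast

lemma card_packing_through_point: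
  assumes "disjoint P"
  shows "card {T\<in>P. x \<in> T} \<le> 1"
proof (cases "finite {T\<in>P. x \<in> T}")
  case True
  then show ?thesis
    using assms by (auto simp: card_le_Suc0_iff_eq disjoint_def)
qed simp

lemma independent_colouring_of_two_packings:
  assumes "finite g" "\<And>T. T \<in> g \<Longrightarrow> card T = 3" "union_of_two_packings g"
  shows "\<exists>P col. P \<subseteq> g \<and> disjoint P \<and> disjoint (g - P) \<and> (\<forall>T\<in>g. independent_on col T)"
proof -
  obtain P where P: "P \<subseteq> g" "disjoint P" "disjoint (g - P)"
    using assms(3) unfolding union_of_two_packings_def by blast
  have "card {T\<in>g. x \<in> T} \<le> 2" for x
  proof -
    have "{T\<in>g. x \<in> T} = {T\<in>P. x \<in> T} \<union> {T\<in>g - P. x \<in> T}" using P(1) by blast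
    then have "card {T\<in>g. x \<in> T} \<le> card {T\<in>P. x \<in> T} + card {T\<in>g - P. x \<in> T}"
      by (simp add: card_Un_le)
    then show ?thesis
      using card_packing_through_point[OF P(2), of x] card_packing_through_point[OF P(3), of x]
      by linarith
  qed
  then show ?thesis using independent_colouring_exists[OF assms(1,2)] P by blast
qed

text \<open>The word on block T in the k-th code of a group with distinguished packing P. Two blocks of the group
  through a common point lie on different sides of P, so their words differ at that point; for
  fixed T the eight vectors k give the eight words supported on T once the colours on T are
  independent.\<close>

definition group_word :: "nat set set \<Rightarrow> (nat \<Rightarrow> vec3) \<Rightarrow> vec3 \<Rightarrow> nat set \<Rightarrow> nat \<Rightarrow> nat" where
  "group_word P col k T = word T (\<lambda>i. dot (col i) k + of_bool (T \<in> P))"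

lemma supp_group_word [simp]: "supp (group_word P col k T) = T"
  by (simp add: group_word_def)

lemma is_code_group_words:
  assumes g: "g \<subseteq> triples {..<N}" "g \<noteq> {}" "partial_linear g" and P: "disjoint P" "disjoint (g - P)"
  shows "is_code 3 N 5 3 (group_word P col k ` g)"
  unfolding is_code_def
proof (intro conjI ballI impI)
  show "group_word P col k ` g \<noteq> {}" using g(2) by simp
  show "group_word P col k ` g \<subseteq> Hq 3 N 3"
    using g(1) word_in_Hq unfolding group_word_def by blast
  fix w1 w2 assume "w1 \<in> group_word P col k ` g" "w2 \<in> group_word P col k ` g" "w1 \<noteq> w2"
  then obtain T1 T2 where T: "T1 \<in> g" "T2 \<in> g" "T1 \<noteq> T2"
    and w: "w1 = group_word P col k T1" "w2 = group_word P col k T2" by blast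
  have sides: "(T1 \<in> P) \<noteq> (T2 \<in> P)" if "i \<in> T1 \<inter> T2" for i
    using P T that unfolding disjoint_def by blast
  have card3: "card T1 = 3" "card T2 = 3" and sub: "T1 \<union> T2 \<subseteq> {..<N}"
    using g(1) T unfolding triples_def by auto
  then have fin: "finite T1" "finite T2" by (auto intro: card_ge_0_finite)
  have "hdist N w1 w2 = card (T1 \<union> T2)"
    unfolding w group_word_def using sides sub by (intro hdist_word) (auto simp: of_bool_def)
  moreover have "card (T1 \<inter> T2) \<le> 1" using g(3) T unfolding partial_linear_def by blast
  ultimately show "5 \<le> hdist N w1 w2"
    using card_Un_Int[OF fin] card3 by linarith
qed

lemma optimal_code_group_words:
  assumes g: "g \<subseteq> triples {..<N}" "g \<noteq> {}" "partial_linear g" "2 * N div 3 \<le> card g"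
    and P: "disjoint P" "disjoint (g - P)"
  shows "optimal_code 3 N 5 3 (group_word P col k ` g)"
proof (rule optimal_code_if_card_ge)
  show "is_code 3 N 5 3 (group_word P col k ` g)" using g(1-3) P by (rule is_code_group_words)
  have "inj_on (group_word P col k) g" by (rule inj_onI) (metis supp_group_word)
  then show "2 * N div 3 \<le> card (group_word P col k ` g)" using g(4) by (simp add: card_image)
qed

lemma group_word_labels:
  assumes "card T = 3" "independent_on col T"
  shows "\<exists>k. group_word P col k T = word T b"
    and "group_word P col k T = group_word P col l T \<Longrightarrow> k = l"
proof -
  note bij = bij_betw_dot_restrict[OF assms]
  have "restrict (\<lambda>i. b i + of_bool (T \<in> P)) T \<in> range (\<lambda>k. restrict (\<lambda>i. dot (col i) k) T)"
    using bij_betw_imp_surj_on[OF bij] by simp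
  then obtain k where k: "restrict (\<lambda>i. b i + of_bool (T \<in> P)) T = restrict (\<lambda>i. dot (col i) k) T"
    by (rule rangeE)
  have "dot (col i) k + of_bool (T \<in> P) = b i" if "i \<in> T" for i
  proof -
    have "b i + of_bool (T \<in> P) = dot (col i) k"
      using fun_cong[OF k, of i] by (simp only: restrict_apply'[OF that])
    then show ?thesis by (metis add.assoc bit_add_self add.right_neutral)
  qed
  then show "\<exists>k. group_word P col k T = word T b"
    unfolding group_word_def word_eq_iff by blast
next
  assume "group_word P col k T = group_word P col l T"
  then have "restrict (\<lambda>i. dot (col i) k) T = restrict (\<lambda>i. dot (col i) l) T"
    unfolding group_word_def word_eq_iff by (auto simp del: add_bit_eq_xor)
  then show "k = l"
    by (rule injD[OF bij_betw_imp_inj_on[OF bij_betw_dot_restrict[OF assms]]])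
qed

lemma Hq_in_group_words:
  assumes "w \<in> Hq 3 N 3" "supp w \<in> g" "card (supp w) = 3" "independent_on col (supp w)"
  shows "\<exists>k. w \<in> group_word P col k ` g"
proof -
  obtain k where "group_word P col k (supp w) = w"
    using group_word_labels(1)[OF assms(3,4)] Hq_eq_word[OF assms(1)] by metis
  then show ?thesis using assms(2) by (metis imageI)
qed

lemma group_words_codes_disjoint:
  assumes "\<forall>T\<in>g. card T = 3 \<and> independent_on col T"
    and "w \<in> group_word P col k ` g" "w \<in> group_word P col k' ` g"
  shows "k = k'"
proof -
  obtain T T' where T: "T \<in> g" "T' \<in> g"
    and eq: "w = group_word P col k T" "w = group_word P col k' T'"
    using assms(2,3) by blast
  then have "T' = T" by (metis supp_group_word)
  then have "group_word P col k T = group_word P col k' T" using eq by simp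
  then show ?thesis using assms(1) T(1) by (intro group_word_labels(2)) auto
qed

lemma is_TOC_of_family:
  assumes "\<And>i. i \<in> I \<Longrightarrow> optimal_code q n d w (C i)" "(\<Union>i\<in>I. C i) = Hq q n w"
    and "\<And>i j x. i \<in> I \<Longrightarrow> j \<in> I \<Longrightarrow> x \<in> C i \<Longrightarrow> x \<in> C j \<Longrightarrow> C i = C j"
  shows "is_TOC q n d w (C ` I)"
  using assms unfolding is_TOC_def by blast

lemma TOC_from_partition:
  assumes part: "partition_on (triples {..<N}) \<G>"
    and groups: "\<And>g. g \<in> \<G> \<Longrightarrow> partial_linear g \<and> union_of_two_packings g \<and> 2 * N div 3 \<le> card g"
  shows "\<exists>\<P>. is_TOC 3 N 5 3 \<P>"
proof -
  have sub: "g \<subseteq> triples {..<N}" if "g \<in> \<G>" for g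
    using partition_onD1[OF part] that by blast
  have card3: "card T = 3" if "T \<in> g" "g \<in> \<G>" for T g
    using sub that unfolding triples_def by blast
  have "finite g" if "g \<in> \<G>" for g using sub[OF that] finite_triples finite_subset by blast
  then obtain P col where Pcol: "\<And>g. g \<in> \<G> \<Longrightarrow>
      P g \<subseteq> g \<and> disjoint (P g) \<and> disjoint (g - P g) \<and> (\<forall>T\<in>g. independent_on (col g) T)"
    using independent_colouring_of_two_packings card3 groups by metis
  define code where "code = (\<lambda>(g, k). group_word (P g) (col g) k ` g)"
  have "is_TOC 3 N 5 3 (code ` (\<G> \<times> UNIV))"
  proof (rule is_TOC_of_family)
    fix gk assume "gk \<in> \<G> \<times> (UNIV :: vec3 set)"
    then show "optimal_code 3 N 5 3 (code gk)"
      unfolding code_def using sub partition_onD3[OF part] groups Pcol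
      by (auto intro!: optimal_code_group_words)
  next
    have "\<exists>gk\<in>\<G> \<times> UNIV. w \<in> code gk" if w: "w \<in> Hq 3 N 3" for w
    proof -
      obtain g where g: "g \<in> \<G>" "supp w \<in> g"
        using Hq_supp_triple[OF w] partition_onD1[OF part] by blast
      moreover have "card (supp w) = 3" "independent_on (col g) (supp w)"
        using card3[OF g(2,1)] Pcol[OF g(1)] g(2) by auto
      ultimately obtain k where "w \<in> group_word (P g) (col g) k ` g"
        using Hq_in_group_words[OF w] by blast
      then have "w \<in> code (g, k)" unfolding code_def by simp
      then show ?thesis using g(1) by (intro bexI[of _ "(g, k)"]) auto
    qed
    moreover have "code gk \<subseteq> Hq 3 N 3" if "gk \<in> \<G> \<times> UNIV" for gk
      using that sub unfolding code_def group_word_def by (auto intro: word_in_Hq)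
    ultimately show "(\<Union>gk\<in>\<G> \<times> UNIV. code gk) = Hq 3 N 3" by fast
  next
    fix gk gk' w assume "gk \<in> \<G> \<times> (UNIV :: vec3 set)" "gk' \<in> \<G> \<times> (UNIV :: vec3 set)"
      and w: "w \<in> code gk" "w \<in> code gk'"
    then obtain g k g' k' where g: "g \<in> \<G>" "g' \<in> \<G>" and gk: "gk = (g, k)" "gk' = (g', k')" by auto
    have "supp w \<in> g" using w(1) unfolding code_def gk by auto
    moreover have "supp w \<in> g'" using w(2) unfolding code_def gk by auto
    ultimately have "g' = g" using disjointD[OF partition_onD2[OF part] g] by blast
    have "\<forall>T\<in>g. card T = 3 \<and> independent_on (col g) T" using card3 g(1) Pcol[OF g(1)] by blast
    moreover have "w \<in> group_word (P g) (col g) k ` g" "w \<in> group_word (P g) (col g) k' ` g"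
      using w \<open>g' = g\<close> unfolding code_def gk by simp_all
    ultimately have "k = k'" by (rule group_words_codes_disjoint)
    then show "code gk = code gk'" using \<open>g' = g\<close> gk by simp
  qed
  then show ?thesis by blast
qed

section \<open>Kirkman triple systems\<close>

lemma STS_block_through_pair:
  assumes "is_STS Y B" "S \<in> B" "T \<in> B" "a \<in> S \<inter> T" "b \<in> S \<inter> T" "a \<noteq> b"
  shows "S = T"
proof -
  have "a \<in> Y" "b \<in> Y" using assms unfolding is_STS_def triples_def by auto
  then have "\<exists>!U. U \<in> B \<and> {a, b} \<subseteq> U" using assms(1,6) unfolding is_STS_def by blast
  with assms(2-5) show ?thesis by blast
qed

lemma STS_block_exists:
  assumes "is_STS Y B" "a \<in> Y" "b \<in> Y" "a \<noteq> b"
  shows "\<exists>T\<in>B. {a, b} \<subseteq> T"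
  using assms unfolding is_STS_def by (meson ex1E)

lemma STS_finite_block:
  assumes "is_STS Y B" "T \<in> B"
  shows "finite T" "card T = 3" "T \<subseteq> Y"
  using assms unfolding is_STS_def triples_def by (auto intro: finite_subset)

lemma STS_partial_linear:
  assumes "is_STS Y B"
  shows "partial_linear B"
  unfolding partial_linear_def
proof (intro ballI impI)
  fix S T assume ST: "S \<in> B" "T \<in> B" "S \<noteq> T"
  have "finite (S \<inter> T)" using STS_finite_block[OF assms ST(1)] by simp
  moreover have "a = b" if "a \<in> S \<inter> T" "b \<in> S \<inter> T" for a b
    using STS_block_through_pair[OF assms ST(1,2) that] ST(3) by blast
  ultimately show "card (S \<inter> T) \<le> 1" by (simp add: card_le_Suc0_iff_eq)
qed

lemma card_parallel_class:
  assumes "P \<subseteq> triples Y" "parallel_class Y P"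
  shows "card Y = 3 * card P"
proof -
  have card3: "card T = 3" if "T \<in> P" for T using assms(1) that unfolding triples_def by blast
  have "card Y = card (\<Union>P)" using assms(2) unfolding parallel_class_def by simp
  also have "\<dots> = sum card P"
  proof (rule card_Union_disjoint)
    show "pairwise disjnt P"
      using assms(2) unfolding parallel_class_def pairwise_def disjnt_def by blast
    show "finite T" if "T \<in> P" for T using card3[OF that] by (intro card_ge_0_finite) simp
  qed
  also have "\<dots> = 3 * card P" using card3 by simp
  finally show ?thesis .
qed

lemma STS_replication:
  assumes "is_STS Y B" "y \<in> Y"
  shows "card Y = Suc (2 * card {T\<in>B. y \<in> T})"
proof -
  define By where "By = {T\<in>B. y \<in> T}"
  have finY: "finite Y" using assms(1) unfolding is_STS_def by blast
  have "Y - {y} = (\<Union>T\<in>By. T - {y})"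
  proof
    show "Y - {y} \<subseteq> (\<Union>T\<in>By. T - {y})"
    proof
      fix z assume z: "z \<in> Y - {y}"
      then obtain T where "T \<in> B" "{y, z} \<subseteq> T"
        using STS_block_exists[OF assms(1,2), of z] by blast
      with z show "z \<in> (\<Union>T\<in>By. T - {y})" unfolding By_def by blast
    qed
    show "(\<Union>T\<in>By. T - {y}) \<subseteq> Y - {y}"
      using STS_finite_block(3)[OF assms(1)] unfolding By_def by blast
  qed
  then have "card (Y - {y}) = card (\<Union>T\<in>By. T - {y})" by simp
  moreover have "card (\<Union>T\<in>By. T - {y}) = (\<Sum>T\<in>By. card (T - {y}))"
  proof (rule card_UN_disjoint)
    have "By \<subseteq> triples Y" using assms(1) unfolding is_STS_def By_def by blast
    then show "finite By" using finite_triples[OF finY] by (rule finite_subset)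
    show "\<forall>T\<in>By. finite (T - {y})"
      using STS_finite_block(1)[OF assms(1)] unfolding By_def by blast
    show "\<forall>T\<in>By. \<forall>U\<in>By. T \<noteq> U \<longrightarrow> (T - {y}) \<inter> (U - {y}) = {}"
      using STS_block_through_pair[OF assms(1)] unfolding By_def by blast
  qed
  moreover have "(\<Sum>T\<in>By. card (T - {y})) = 2 * card By"
    using STS_finite_block[OF assms(1)] unfolding By_def by (simp add: card_Diff_singleton)
  moreover have "card (Y - {y}) = card Y - 1" using assms(2) finY by simp
  moreover have "card Y \<noteq> 0" using assms(2) finY by auto
  ultimately show ?thesis unfolding By_def by linarith
qed

lemma card_resolution:
  assumes STS: "is_STS Y B" and R: "\<Union>R = B" "disjoint R" "\<forall>P\<in>R. parallel_class Y P"
    and y: "y \<in> Y"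
  shows "card R = card {T\<in>B. y \<in> T}"
proof -
  have "finite B" using STS finite_triples finite_subset unfolding is_STS_def by metis
  then have finR: "finite R" using R(1) by (simp add: finite_UnionD)
  have one: "card {T\<in>P. y \<in> T} = 1" if P: "P \<in> R" for P
  proof -
    obtain T where T: "T \<in> P" "y \<in> T" using R(3) P y unfolding parallel_class_def by blast
    have "{T\<in>P. y \<in> T} = {T}"
      using R(3) P T unfolding parallel_class_def by blast
    then show ?thesis by simp
  qed
  have "{T\<in>B. y \<in> T} = (\<Union>P\<in>R. {T\<in>P. y \<in> T})" using R(1) by blast
  also have "card \<dots> = (\<Sum>P\<in>R. card {T\<in>P. y \<in> T})"
  proof (rule card_UN_disjoint[OF finR])
    show "\<forall>P\<in>R. finite {T\<in>P. y \<in> T}" using one by (metis card.infinite zero_neq_one)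
    show "\<forall>P\<in>R. \<forall>Q\<in>R. P \<noteq> Q \<longrightarrow> {T\<in>P. y \<in> T} \<inter> {T\<in>Q. y \<in> T} = {}"
      using R(2) unfolding disjoint_def by blast
  qed
  also have "\<dots> = card R" using one by simp
  finally show ?thesis by simp
qed

lemma partition_into_pairs:
  assumes "finite R" "even (card R)"
  shows "\<exists>M. partition_on R M \<and> (\<forall>p\<in>M. card p = 2)"
  using assms
proof (induction "card R" arbitrary: R rule: less_induct)
  case less
  show ?case
  proof (cases "R = {}")
    case True
    then show ?thesis by (auto simp: partition_on_empty)
  next
    case False
    with less.prems(1) have "card R \<noteq> 0" by simp
    with less.prems(2) have two: "\<not> card R \<le> Suc 0" by presburger
    then obtain a b where ab: "a \<in> R" "b \<in> R" "a \<noteq> b"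
      using card_le_Suc0_iff_eq[OF less.prems(1)] by blast
    define R' where "R' = R - {a, b}"
    have "card R' = card R - 2"
      unfolding R'_def using ab less.prems(1) by (subst card_Diff_subset) auto
    then have "card R' < card R" "even (card R')" using two less.prems(2) by presburger+
    moreover have "finite R'" unfolding R'_def using less.prems(1) by simp
    ultimately obtain M' where M': "partition_on R' M'" "\<forall>p\<in>M'. card p = 2"
      using less.hyps by blast
    have "partition_on R (insert {a, b} M')"
      using M'(1) ab partition_onD1[OF M'(1)] unfolding R'_def
      by (subst partition_on_insert) (auto simp: disjnt_def)
    then show ?thesis using M'(2) ab by auto
  qed
qed

lemma union_of_two_parallel_classes:
  assumes Y: "finite Y" and PQ: "P \<subseteq> triples Y" "Q \<subseteq> triples Y" "parallel_class Y P" "parallel_class Y Q"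
    and disj: "P \<inter> Q = {}"
  shows "union_of_two_packings (P \<union> Q)" "card (P \<union> Q) = 2 * (card Y div 3)"
proof -
  have "disjoint P" "disjoint Q" using PQ(3,4) unfolding parallel_class_def disjoint_def by auto
  moreover have "P \<union> Q - P = Q" using disj by blast
  ultimately show "union_of_two_packings (P \<union> Q)"
    unfolding union_of_two_packings_def by (metis sup_ge1)
  have "finite P" "finite Q" using PQ(1,2) finite_triples[OF Y] finite_subset by auto
  then have "card (P \<union> Q) = card P + card Q" using disj by (rule card_Un_disjoint)
  also have "\<dots> = 2 * (card Y div 3)"
    using card_parallel_class[OF PQ(1,3)] card_parallel_class[OF PQ(2,4)] by simp
  finally show "card (P \<union> Q) = 2 * (card Y div 3)" .
qed

lemma partition_on_Union_blocks:
  assumes R: "disjoint R" and M: "partition_on R M" "\<And>p. p \<in> M \<Longrightarrow> \<Union>p \<noteq> {}"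
  shows "partition_on (\<Union>R) (Union ` M)"
proof (rule partition_onI)
  show "\<Union>(Union ` M) = \<Union>R" using partition_onD1[OF M(1)] by blast
  show "{} \<notin> Union ` M"
  proof
    assume "{} \<in> Union ` M"
    then obtain p where "p \<in> M" "{} = \<Union>p" by (rule imageE)
    with M(2) show False by blast
  qed
  show "disjnt a b" if ab: "a \<in> Union ` M" "b \<in> Union ` M" "a \<noteq> b" for a b
  proof -
    obtain p q where pq: "p \<in> M" "q \<in> M" "a = \<Union>p" "b = \<Union>q" "p \<noteq> q"
      using ab by blast
    then have "p \<inter> q = {}" "p \<subseteq> R" "q \<subseteq> R"
      using partition_onD1[OF M(1)] partition_onD2[OF M(1)] unfolding disjoint_def by blast+
    then have "P \<inter> Q = {}" if "P \<in> p" "Q \<in> q" for P Q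
      using that by (intro disjointD[OF R]) blast+
    then show ?thesis unfolding pq(3,4) disjnt_def by blast
  qed
qed

lemma KTS_grouping:
  assumes KTS: "is_KTS Y B" and n: "card Y = n" "n mod 12 = 9"
  shows "\<exists>\<G>. partition_on B \<G> \<and>
    (\<forall>g\<in>\<G>. partial_linear g \<and> union_of_two_packings g \<and> card g = 2 * (n div 3))"
proof -
  have STS: "is_STS Y B" using KTS unfolding is_KTS_def by blast
  then have Y: "finite Y" and BY: "B \<subseteq> triples Y" unfolding is_STS_def by auto
  obtain R where R: "\<Union>R = B" "disjoint R" "\<forall>P\<in>R. parallel_class Y P"
    using KTS unfolding is_KTS_def disjoint_def by blast
  have "Y \<noteq> {}" using n by auto
  then obtain y where y: "y \<in> Y" by blast
  have "n = Suc (2 * card R)"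
    using STS_replication[OF STS y] card_resolution[OF STS R y] n(1) by simp
  then have "even (card R)" "card R \<noteq> 0" using n(2) by presburger+
  then have "finite R" by (meson card.infinite)
  then obtain M where M: "partition_on R M" "\<forall>p\<in>M. card p = 2"
    using partition_into_pairs \<open>even (card R)\<close> by blast
  have RB: "P \<subseteq> triples Y" if "P \<in> R" for P
  proof -
    have "P \<subseteq> B" using Union_upper[OF that] R(1) by simp
    then show ?thesis using BY by (rule subset_trans)
  qed
  have pair: "partial_linear (\<Union>p) \<and> union_of_two_packings (\<Union>p) \<and> card (\<Union>p) = 2 * (n div 3)"
    if "p \<in> M" for p
  proof -
    obtain P Q where p: "p = {P, Q}" "P \<noteq> Q" using M(2) \<open>p \<in> M\<close> card_2_iff by metis
    then have PQ: "P \<in> R" "Q \<in> R" using partition_onD1[OF M(1)] \<open>p \<in> M\<close> by blast+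
    then have "P \<inter> Q = {}" using R(2) p(2) unfolding disjoint_def by blast
    note PQ_props = union_of_two_parallel_classes[OF Y RB[OF PQ(1)] RB[OF PQ(2)]
        R(3)[rule_format, OF PQ(1)] R(3)[rule_format, OF PQ(2)] this]
    have "P \<union> Q \<subseteq> B" using PQ R(1) by blast
    then have "partial_linear (P \<union> Q)"
      by (rule partial_linear_subset[OF STS_partial_linear[OF STS]])
    with PQ_props show ?thesis unfolding p(1) n(1) by simp
  qed
  have "0 < n div 3" using n(2) by presburger
  have "\<Union>p \<noteq> {}" if "p \<in> M" for p
  proof -
    have "card (\<Union>p) \<noteq> 0" using pair[OF that] \<open>0 < n div 3\<close> by simp
    then show ?thesis by (metis card.empty)
  qed
  then have "partition_on (\<Union>R) (Union ` M)" by (rule partition_on_Union_blocks[OF R(2) M(1)])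
  moreover have "\<forall>g\<in>Union ` M. partial_linear g \<and> union_of_two_packings g \<and> card g = 2 * (n div 3)"
    using pair by blast
  ultimately show ?thesis unfolding R(1) by blast
qed

lemma triples_image:
  assumes "inj_on f X"
  shows "triples (f ` X) = (`) f ` triples X"
proof (intro equalityI subsetI)
  fix S assume "S \<in> triples (f ` X)"
  then obtain T where "T \<subseteq> X" "S = f ` T" "card S = 3"
    unfolding triples_def by (auto simp: subset_image_iff)
  moreover from this have "card T = 3" using card_image[OF inj_on_subset[OF assms]] by metis
  ultimately show "S \<in> (`) f ` triples X" unfolding triples_def by blast
next
  fix S assume "S \<in> (`) f ` triples X"
  then obtain T where "T \<subseteq> X" "card T = 3" "S = f ` T" unfolding triples_def by blast
  then show "S \<in> triples (f ` X)"
    using card_image[OF inj_on_subset[OF assms]] unfolding triples_def by auto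
qed

lemma parallel_class_image:
  assumes "inj_on f X" "parallel_class X P"
  shows "parallel_class (f ` X) ((`) f ` P)"
proof -
  have "\<Union>P = X" "disjoint P" using assms(2) unfolding parallel_class_def disjoint_def by auto
  then have "disjoint ((`) f ` P)" using assms(1) by (intro disjoint_image) simp
  with \<open>\<Union>P = X\<close> show ?thesis unfolding parallel_class_def disjoint_def by blast
qed

lemma STS_image:
  assumes f: "inj_on f X" and STS: "is_STS X B"
  shows "is_STS (f ` X) ((`) f ` B)"
  unfolding is_STS_def
proof (intro conjI ballI impI)
  show "finite (f ` X)" using STS unfolding is_STS_def by simp
  show "(`) f ` B \<subseteq> triples (f ` X)"
    using STS triples_image[OF f] unfolding is_STS_def by blast
  fix x' y' assume "x' \<in> f ` X" "y' \<in> f ` X" "x' \<noteq> y'"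
  then obtain x y where xy: "x \<in> X" "y \<in> X" "x \<noteq> y" "x' = f x" "y' = f y" by blast
  have BX: "T \<subseteq> X" if "T \<in> B" for T using STS_finite_block(3)[OF STS that] .
  have mem: "{x', y'} \<subseteq> f ` T \<longleftrightarrow> {x, y} \<subseteq> T" if "T \<in> B" for T
    using xy BX[OF that] inj_on_image_mem_iff[OF f] by auto
  obtain T where T: "T \<in> B" "{x, y} \<subseteq> T"
    using STS_block_exists[OF STS xy(1-3)] by blast
  show "\<exists>!S. S \<in> (`) f ` B \<and> {x', y'} \<subseteq> S"
  proof (rule ex1I[of _ "f ` T"])
    show "f ` T \<in> (`) f ` B \<and> {x', y'} \<subseteq> f ` T" using T mem[OF T(1)] by blast
    fix S assume S: "S \<in> (`) f ` B \<and> {x', y'} \<subseteq> S"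
    then obtain U where U: "U \<in> B" "S = f ` U" by blast
    have "{x, y} \<subseteq> U" using mem[OF U(1)] S U(2) by simp
    then have "U = T" using STS_block_through_pair[OF STS U(1) T(1), of x y] T(2) xy(3) by blast
    then show "S = f ` T" using U(2) by simp
  qed
qed

lemma KTS_image:
  assumes f: "inj_on f X" and KTS: "is_KTS X B"
  shows "is_KTS (f ` X) ((`) f ` B)"
proof -
  have STS: "is_STS X B" using KTS unfolding is_KTS_def by blast
  obtain R where R: "\<Union>R = B" "disjoint R" "\<forall>P\<in>R. parallel_class X P"
    using KTS unfolding is_KTS_def disjoint_def by blast
  have "inj_on ((`) f) (\<Union>R)"
    using inj_on_image_Pow[OF f] STS_finite_block(3)[OF STS] R(1) by (auto intro: inj_on_subset)
  then have "disjoint ((`) ((`) f) ` R)" using R(2) by (rule disjoint_image)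
  moreover have "\<Union>((`) ((`) f) ` R) = (`) f ` B" using R(1) by blast
  moreover have "\<forall>P\<in>(`) ((`) f) ` R. parallel_class (f ` X) P"
    using R(3) parallel_class_image[OF f] by blast
  ultimately show ?thesis
    using STS_image[OF f STS] unfolding is_KTS_def disjoint_def by blast
qed

lemma partition_on_UN:
  assumes "disjoint_family_on A I" "\<And>i. i \<in> I \<Longrightarrow> partition_on (A i) (P i)"
  shows "partition_on (\<Union>i\<in>I. A i) (\<Union>i\<in>I. P i)"
proof (rule partition_onI)
  have "\<Union>(\<Union>i\<in>I. P i) = (\<Union>i\<in>I. \<Union>(P i))" by blast
  also have "\<dots> = (\<Union>i\<in>I. A i)"
    using partition_onD1[OF assms(2)] by (intro SUP_cong) simp_all
  finally show "\<Union>(\<Union>i\<in>I. P i) = (\<Union>i\<in>I. A i)" .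
  show "{} \<notin> (\<Union>i\<in>I. P i)" using assms(2) partition_onD3 by blast
  fix p q assume "p \<in> (\<Union>i\<in>I. P i)" "q \<in> (\<Union>i\<in>I. P i)" "p \<noteq> q"
  then obtain i j where ij: "i \<in> I" "j \<in> I" "p \<in> P i" "q \<in> P j" by blast
  show "disjnt p q"
  proof (cases "i = j")
    case True
    then show ?thesis using ij \<open>p \<noteq> q\<close> assms(2) partition_onD2 pairwiseD by metis
  next
    case False
    then have "A i \<inter> A j = {}" using assms(1) ij(1,2) unfolding disjoint_family_on_def by blast
    moreover have "p \<subseteq> A i" "q \<subseteq> A j"
      using ij partition_onD1[OF assms(2)[OF ij(1)]] partition_onD1[OF assms(2)[OF ij(2)]] by blast+
    ultimately show ?thesis unfolding disjnt_def by blast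
  qed
qed

lemma TOC_from_KTS_decomposition:
  fixes Y :: "'i \<Rightarrow> nat set" and \<B> :: "'i \<Rightarrow> nat set set"
  assumes X: "finite X" "card X = N" and n: "n mod 12 = 9" "2 * N div 3 \<le> 2 * (n div 3)"
    and KTS: "\<And>i. i \<in> I \<Longrightarrow> is_KTS (Y i) (\<B> i) \<and> card (Y i) = n \<and> Y i \<subseteq> X"
    and disj: "disjoint_family_on \<B> I" and cover: "(\<Union>i\<in>I. \<B> i) = triples X"
  shows "\<exists>\<P>. is_TOC 3 N 5 3 \<P>"
proof -
  obtain f where f: "bij_betw f X {..<N}"
    using ex_bij_betw_finite_nat[OF X(1)] X(2) by (metis atLeast0LessThan)
  then have inj: "inj_on f X" and fX: "f ` X = {..<N}" unfolding bij_betw_def by auto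
  have BX: "\<B> i \<subseteq> Pow X" if "i \<in> I" for i using cover that unfolding triples_def by blast
  have "\<exists>\<G>. partition_on ((`) f ` \<B> i) \<G> \<and>
      (\<forall>g\<in>\<G>. partial_linear g \<and> union_of_two_packings g \<and> card g = 2 * (n div 3))"
    if i: "i \<in> I" for i
  proof (rule KTS_grouping)
    have "inj_on f (Y i)" using inj KTS[OF i] by (blast intro: inj_on_subset)
    then show "is_KTS (f ` Y i) ((`) f ` \<B> i)" "card (f ` Y i) = n"
      using KTS_image KTS[OF i] card_image by auto
  qed (rule n(1))
  then obtain \<G> where \<G>: "\<And>i. i \<in> I \<Longrightarrow> partition_on ((`) f ` \<B> i) (\<G> i) \<and>
      (\<forall>g\<in>\<G> i. partial_linear g \<and> union_of_two_packings g \<and> card g = 2 * (n div 3))"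
    by metis
  have "disjoint_family_on (\<lambda>i. (`) f ` \<B> i) I"
    using disj inj_on_image_Int[OF inj_on_image_Pow[OF inj] BX BX]
    unfolding disjoint_family_on_def by (metis image_empty)
  moreover have "(\<Union>i\<in>I. (`) f ` \<B> i) = triples {..<N}"
    using cover triples_image[OF inj] fX by (simp add: image_UN[symmetric])
  ultimately have "partition_on (triples {..<N}) (\<Union>i\<in>I. \<G> i)"
    using partition_on_UN[of "\<lambda>i. (`) f ` \<B> i" I \<G>] \<G> by simp
  then show ?thesis
    using \<G> n(2) by (intro TOC_from_partition) auto
qed

theorem corollary4p10:
  fixes n :: nat
  assumes "n mod 12 = 9"
  shows "(exists_LKTS n \<longrightarrow> (\<exists>P. is_TOC 3 n 5 3 P)) \<and>
         (exists_OLKTS n \<longrightarrow> (\<exists>P. is_TOC 3 (n + 1) 5 3 P))"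
proof (intro conjI impI)
  assume "exists_LKTS n"
  then obtain X :: "nat set" and L where X: "finite X" "card X = n" "\<Union>L = triples X"
    and L: "\<forall>B\<in>L. \<forall>B'\<in>L. B \<noteq> B' \<longrightarrow> B \<inter> B' = {}" "\<forall>B\<in>L. is_KTS X B"
    unfolding exists_LKTS_def by (elim exE conjE) (rule that; assumption)
  have "2 * n div 3 \<le> 2 * (n div 3)" using assms by presburger
  moreover have "disjoint_family_on id L" using L(1) unfolding disjoint_family_on_def by simp
  moreover have "(\<Union>B\<in>L. id B) = triples X" using X(3) by simp
  ultimately show "\<exists>P. is_TOC 3 n 5 3 P"
    using TOC_from_KTS_decomposition[OF X(1,2) assms, of L "\<lambda>_. X" id] L(2) X(2) by simp
next
  assume "exists_OLKTS n"
  then obtain X :: "nat set" and \<B> where X: "finite X" "card X = n + 1"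
    "(\<Union>x\<in>X. \<B> x) = triples X" "\<forall>x\<in>X. \<forall>y\<in>X. x \<noteq> y \<longrightarrow> \<B> x \<inter> \<B> y = {}"
    "\<forall>x\<in>X. is_KTS (X - {x}) (\<B> x)"
    unfolding exists_OLKTS_def by (elim exE conjE) (rule that; assumption)
  have "2 * (n + 1) div 3 \<le> 2 * (n div 3)" using assms by presburger
  moreover have "disjoint_family_on \<B> X" using X(4) unfolding disjoint_family_on_def by simp
  moreover have "card (X - {x}) = n" if "x \<in> X" for x using X(1,2) that by simp
  ultimately show "\<exists>P. is_TOC 3 (n + 1) 5 3 P"
    using TOC_from_KTS_decomposition[OF X(1,2) assms, of X "\<lambda>x. X - {x}" \<B>] X(3,5) by blast
qed

end
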